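(* Let $l_c>0$ and $r_c\in(0,\tfrac1{10})$, and let $(\mathbb C,g_{\mathsf{cb}})$ be the corresponding cb-surface, with parameters $s_0,s_e,s_2,s_b$. Then: (i) $\mathrm K_{g_{\mathsf{cb}}}\in[-1,\tfrac12]$ almost everywhere; (ii) $s_0=-r_c^{-1}\bigl(l_c+\arctan r_c^{-1}\bigr)$ and $s_e=s_0+\tfrac12\log(1+r_c^2)$; in particular $\mathbb D_{\sqrt{1+r_c^2}}=\mathcal U_i\cup\overline{\mathcal U_c}\cup\mathcal U_b$; (iii) $s_b\le \tfrac74 r_c^{-1}$; (iv) $\mathrm{Vol}_{g_{\mathsf{cb}}}\mathcal U_b<10\pi$.
   Context: $\mathbb D_r=\{z\in\mathbb C:|z|<r\}$. For $l_c>0$ and $r_c\in(0,1)$ the cb-surface is the rotationally symmetric plane $(\mathbb C,g_{\mathsf{cb}})$ defined as follows. Using logarithmic cylindrical coordinates $z=e^{-s+s_e+i\theta}$, $(s,\theta)\in\mathbb R\times[0,2\pi)$, on $\mathbb C\setminus\{0\}$ (so $s\to\infty$ corresponds to $z\to0$), set $g_{\mathsf{cb}}=e^{2u_{\mathsf{cb}}(s)}(ds^2+d\theta^2)$ where $u_{\mathsf{cb}}(s)=-s+s_e$ for $s\in(-\infty,s_0]$; $u_{\mathsf{cb}}(s)=-\log\bigl(r_c^{-1}\cos(r_cs+l_c)\bigr)$ for $s\in(s_0,-l_c/r_c)$; $u_{\mathsf{cb}}(s)=\log r_c$ for $s\in[-l_c/r_c,0]$; $u_{\mathsf{cb}}(s)=-\log\bigl(r_c^{-1}\cos(r_cs)\bigr)$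 for $s\in(0,s_2]$; $u_{\mathsf{cb}}(s)=-\log\cosh(s-s_b)+\tfrac12\log 2$ for $s\in(s_2,\infty)$; with parameters $s_0\in\bigl(-\frac{l_c+\pi/2}{r_c},-\frac{l_c}{r_c}\bigr)$, $s_e\in(s_0,-\frac{l_c}{r_c})$, $s_2\in(0,\frac{\pi}{2r_c})$ and $s_b>s_2$ chosen uniquely such that $u_{\mathsf{cb}}\in C^1(\mathbb R)$. The regions are: $\mathcal U_e$ the set with $s\in(-\infty,s_0)$, $\mathcal U_i$ the set with $s\in(s_0,-l_c/r_c)$, $\mathcal U_c$ the set with $s\in(-l_c/r_c,0)$, and $\mathcal U_b$ the set with $s\in(0,\infty)$ together with the origin $z=0$. *)

theory Defs
  imports "HOL-Analysis.Analysis"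
begin

text \<open>Conformal factor of the cb-surface in the cylindrical coordinate s.\<close>
definition u_cb :: "real \<Rightarrow> real \<Rightarrow> real \<Rightarrow> real \<Rightarrow> real \<Rightarrow> real \<Rightarrow> real \<Rightarrow> real" where
  "u_cb lc rc s0 se s2 sb s =
    (if s \<le> s0 then - s + se
     else if s < - lc / rc then - ln (inverse rc * cos (rc * s + lc))
     else if s \<le> 0 then ln rc
     else if s \<le> s2 then - ln (inverse rc * cos (rc * s))
     else - ln (cosh (s - sb)) + ln 2 / 2)"

definition cb_params :: "real \<Rightarrow> real \<Rightarrow> real \<Rightarrow> real \<Rightarrow> real \<Rightarrow> real \<Rightarrow> bool" where
  "cb_params lc rc s0 se s2 sb \<longleftrightarrow>
     - (lc + pi / 2) / rc < s0 \<and> s0 < - lc / rc \<and>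
     s0 < se \<and> se < - lc / rc \<and>
     0 < s2 \<and> s2 < pi / (2 * rc) \<and>
     s2 < sb \<and>
     (u_cb lc rc s0 se s2 sb) C1_differentiable_on UNIV"

text \<open>The cylindrical coordinate s of a point z \<noteq> 0, from z = exp(-s + se + i theta).\<close>
definition cb_s :: "real \<Rightarrow> complex \<Rightarrow> real" where
  "cb_s se z = se - ln (cmod z)"

text \<open>Gaussian curvature K = - e^{-2u} (Laplacian u) in the (s,theta) coordinates;
  u depends only on s, so the Laplacian is u''(s).\<close>
definition K_cb :: "real \<Rightarrow> real \<Rightarrow> real \<Rightarrow> real \<Rightarrow> real \<Rightarrow> real \<Rightarrow> complex \<Rightarrow> real" where
  "K_cb lc rc s0 se s2 sb z =
     - exp (- 2 * u_cb lc rc s0 se s2 sb (cb_s se z))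
       * deriv (deriv (u_cb lc rc s0 se s2 sb)) (cb_s se z)"

definition U_i :: "real \<Rightarrow> real \<Rightarrow> real \<Rightarrow> real \<Rightarrow> complex set" where
  "U_i lc rc s0 se = {z. z \<noteq> 0 \<and> s0 < cb_s se z \<and> cb_s se z < - lc / rc}"

definition U_c :: "real \<Rightarrow> real \<Rightarrow> real \<Rightarrow> complex set" where
  "U_c lc rc se = {z. z \<noteq> 0 \<and> - lc / rc < cb_s se z \<and> cb_s se z < 0}"

definition U_b :: "real \<Rightarrow> complex set" where
  "U_b se = {z. z \<noteq> 0 \<and> 0 < cb_s se z} \<union> {0}"

text \<open>Riemannian area: g = e^{2u}(ds^2 + dtheta^2) = e^{2u} |dz|^2 / |z|^2.\<close>
definition vol_cb :: "real \<Rightarrow> real \<Rightarrow> real \<Rightarrow> real \<Rightarrow> real \<Rightarrow> real \<Rightarrow> complex set \<Rightarrow> ennreal" where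
  "vol_cb lc rc s0 se s2 sb A =
     (\<integral>\<^sup>+ z \<in> A. ennreal (exp (2 * u_cb lc rc s0 se s2 sb (cb_s se z)) / (cmod z)\<^sup>2) \<partial>lborel)"

end

theory Submission
  imports Defs
begin

text \<open>
  On each of its five pieces the conformal factor u is explicit: linear, a hyperbolic profile
  \<open>-ln (cos (rc * s + a) / rc)\<close> solving \<open>u'' = exp (2 u)\<close>, constant, hyperbolic again, and a
  spherical profile solving \<open>u'' = - exp (2 u) / 2\<close>.  Hence \<open>K = - exp (-2 u) u''\<close> takes only
  the values 0, -1 and 1/2 off the four junction circles, which are null sets.

  The \<open>C\<^sup>1\<close> matching at \<open>s0\<close> gives \<open>tan (rc * s0 + lc) = -1/rc\<close> and
  \<open>exp (2 (se - s0)) = 1 + rc\<^sup>2\<close>.  At \<open>s2\<close> it gives \<open>t = u'(s2) = rc tan (rc s2) = tanh (sb - s2)\<close>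
  and \<open>rc\<^sup>2 + t\<^sup>2 = exp (2 u(s2)) = 2 (1 - t\<^sup>2)\<close>, so \<open>3 t\<^sup>2 = 2 - rc\<^sup>2\<close>, which bounds \<open>sb - s2\<close>.

  For the area of \<open>U_b\<close>, a layer-cake argument in the radial variable bounds it by
  \<open>pi rc\<^sup>2 + pi \<integral>\<^sub>0\<^sup>\<infinity> (2 u' + 2) exp (2 u)\<close>; the integrand has the antiderivative
  \<open>exp (2 u) + 2 u'\<close> on the bowl and \<open>exp (2 u) - 4 u'\<close> on the cap, and the total is
  \<open>pi (4 + 6 t) < 10 pi\<close>.
\<close>

lemma isCont_eq_on_closure:
  fixes f g :: "'a::t2_space \<Rightarrow> 'b::t2_space"
  assumes "isCont f x" "isCont g x" "x \<in> closure S" "\<And>y. y \<in> S \<Longrightarrow> f y = g y"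
  shows "f x = g x"
proof (cases "x \<in> S")
  case False
  then have "at x within S \<noteq> bot"
    using assms(3) by (simp add: closure_def trivial_limit_within)
  moreover have "(f \<longlongrightarrow> f x) (at x within S)" "(g \<longlongrightarrow> g x) (at x within S)"
    using assms(1,2) by (auto simp: isCont_def intro: tendsto_within_subset)
  moreover have "eventually (\<lambda>y. f y = g y) (at x within S)"
    using assms(4) by (auto simp: eventually_at_filter)
  ultimately show ?thesis
    by (metis tendsto_cong tendsto_unique)
qed (use assms(4) in simp)

lemma closure_annulus:
  fixes a b :: real
  assumes "0 < a" "a < b"
  shows "closure {z::'a::euclidean_space. a < norm z \<and> norm z < b} = {z. a \<le> norm z \<and> norm z \<le> b}"
    (is "closure ?A = ?B")
proof
  show "closure ?A \<subseteq> ?B"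
    by (intro closure_minimal closed_Collect_conj closed_Collect_le) (auto intro: continuous_intros)
next
  show "?B \<subseteq> closure ?A"
  proof
    fix z assume z: "z \<in> ?B"
    define m where "m = (a + b) / 2"
    define w where "w = (m / norm z) *\<^sub>R z"
    have nz: "0 < norm z" using z assms by auto
    have segment: "open_segment z w \<subseteq> ?A"
    proof
      fix y assume "y \<in> open_segment z w"
      then obtain t where t: "0 < t" "t < 1" and y: "y = ((1 - t) + t * m / norm z) *\<^sub>R z"
        by (auto simp: in_segment w_def algebra_simps)
      have "0 < m" using assms by (simp add: m_def)
      then have "norm y = (1 - t + t * m / norm z) * norm z"
        using y t nz by simp
      also have "\<dots> = (1 - t) * norm z + t * m"
        using nz by (simp add: field_simps)
      finally have "norm y = (1 - t) * norm z + t * m" .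
      moreover have "(1 - t) * a \<le> (1 - t) * norm z" "(1 - t) * norm z \<le> (1 - t) * b"
        using t z by (auto intro: mult_left_mono)
      moreover have "t * a < t * m" "t * m < t * b"
        using t assms by (auto simp: m_def)
      ultimately show "y \<in> ?A" by (auto simp: algebra_simps)
    qed
    show "z \<in> closure ?A"
    proof (cases "z = w")
      case True
      have "norm w = m" using nz assms by (simp add: w_def m_def)
      then show ?thesis using True assms closure_subset by (fastforce simp: m_def)
    next
      case False
      then have "z \<in> closure (open_segment z w)" by simp
      then show ?thesis using closure_mono[OF segment] by blast
    qed
  qed
qed

lemma sphere_in_null_sets: "sphere (c::'a::euclidean_space) r \<in> null_sets lborel"
  using negligible_sphere[of c r]
  by (auto simp: null_sets_completion_iff negligible_iff_null_sets negligible_convex_frontier)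

lemma one_minus_tanh_sq: "1 - (tanh (x::real))\<^sup>2 = inverse ((cosh x)\<^sup>2)"
proof -
  have "1 - (tanh x)\<^sup>2 = ((cosh x)\<^sup>2 - (sinh x)\<^sup>2) / (cosh x)\<^sup>2"
    using cosh_real_pos[of x] by (simp add: tanh_def power_divide field_simps)
  then show ?thesis
    by (simp add: cosh_square_eq divide_inverse)
qed

text \<open>\<open>41 / 50 \<ge> sqrt (2 / 3)\<close> bounds \<open>tanh (sb - s2)\<close>, and \<open>179 / 100\<close> is the slack that
  \<open>sb \<le> 7 / 4 / rc\<close> leaves for \<open>sb - s2\<close> when \<open>rc < 1 / 10\<close>, since \<open>pi / 2 + 0.179 < 7 / 4\<close>.\<close>

lemma tanh_179_100_ge: "41 / 50 \<le> tanh (179 / 100 :: real)"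
proof -
  define w :: real where "w = exp (- 179 / 50)"
  have "(91 / 9 :: real) \<le> 1 + 179 / 50 + (179 / 50)\<^sup>2 / 2"
    by (simp add: power2_eq_square)
  also have "\<dots> \<le> exp (179 / 50)"
    by (rule exp_lower_Taylor_quadratic) simp
  finally have "91 * w \<le> 9"
    by (simp add: w_def exp_minus field_simps)
  moreover have "tanh (179 / 100 :: real) = (1 - w) / (1 + w)"
    by (simp add: tanh_real_altdef w_def)
  moreover have "0 < w" by (simp add: w_def)
  ultimately show ?thesis by (simp add: le_divide_eq)
qed

definition hyperbolic_profile :: "real \<Rightarrow> real \<Rightarrow> real \<Rightarrow> real" where
  "hyperbolic_profile r a s = - ln (inverse r * cos (r * s + a))"

definition spherical_profile :: "real \<Rightarrow> real \<Rightarrow> real" where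
  "spherical_profile b s = - ln (cosh (s - b)) + ln 2 / 2"

lemma hyperbolic_profile_has_derivative:
  assumes "0 < r" "0 < cos (r * s + a)"
  shows "(hyperbolic_profile r a has_real_derivative r * tan (r * s + a)) (at s)"
  unfolding hyperbolic_profile_def using assms
  by (auto intro!: derivative_eq_intros simp: tan_def field_simps)

lemma exp_twice_hyperbolic_profile:
  assumes "0 < r" "0 < cos (r * s + a)"
  shows "exp (2 * hyperbolic_profile r a s) = r\<^sup>2 * (1 + (tan (r * s + a))\<^sup>2)"
proof -
  have "exp (2 * hyperbolic_profile r a s) = r\<^sup>2 * (inverse (cos (r * s + a)))\<^sup>2"
    using assms by (simp add: hyperbolic_profile_def exp_double exp_minus field_simps)
  then show ?thesis
    using assms by (simp add: tan_sec)
qed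

lemma hyperbolic_profile_second_derivative:
  assumes "0 < r" "0 < cos (r * s + a)"
  shows "((\<lambda>s. r * tan (r * s + a)) has_real_derivative exp (2 * hyperbolic_profile r a s)) (at s)"
proof -
  have "((\<lambda>s. r * tan (r * s + a)) has_real_derivative r\<^sup>2 * (inverse (cos (r * s + a)))\<^sup>2) (at s)"
    using assms by (auto intro!: derivative_eq_intros simp: power2_eq_square)
  then show ?thesis
    using assms by (simp add: exp_twice_hyperbolic_profile tan_sec)
qed

lemma spherical_profile_has_derivative:
  "(spherical_profile b has_real_derivative - tanh (s - b)) (at s)"
  unfolding spherical_profile_def using cosh_real_pos[of "s - b"]
  by (auto intro!: derivative_eq_intros simp: tanh_def field_simps)

lemma exp_twice_spherical_profile:
  "exp (2 * spherical_profile b s) = 2 * (1 - (tanh (s - b))\<^sup>2)"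
proof -
  have "2 * spherical_profile b s = ln 2 - 2 * ln (cosh (s - b))"
    by (simp add: spherical_profile_def)
  then have "exp (2 * spherical_profile b s) = exp (ln 2) / (exp (ln (cosh (s - b))))\<^sup>2"
    by (simp add: exp_diff exp_double)
  then show ?thesis
    using cosh_real_pos[of "s - b"] by (simp add: one_minus_tanh_sq field_simps)
qed

lemma spherical_profile_second_derivative:
  "((\<lambda>s. - tanh (s - b)) has_real_derivative - exp (2 * spherical_profile b s) / 2) (at s)"
  using cosh_real_pos[of "s - b"]
  by (auto intro!: derivative_eq_intros simp: exp_twice_spherical_profile)

lemma ennreal_eq_add_nn_integral_deriv:
  fixes H H' :: "real \<Rightarrow> real"
  assumes "0 \<le> s" "0 \<le> H 0" and [measurable]: "H' \<in> borel_measurable borel"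
    and H: "\<And>\<sigma>. 0 \<le> \<sigma> \<Longrightarrow> (H has_real_derivative H' \<sigma>) (at \<sigma>)"
    and H'_nonneg: "\<And>\<sigma>. 0 \<le> \<sigma> \<Longrightarrow> 0 \<le> H' \<sigma>"
  shows "ennreal (H s) = ennreal (H 0) + (\<integral>\<^sup>+\<sigma> \<in> {0..s}. ennreal (H' \<sigma>) \<partial>lborel)"
proof -
  have "(\<integral>\<^sup>+\<sigma> \<in> {0..s}. ennreal (H' \<sigma>) \<partial>lborel) = ennreal (H s - H 0)"
    using assms(1) by (intro nn_integral_FTC_Icc) (auto intro: H H'_nonneg)
  moreover have "H 0 \<le> H s"
  proof (rule DERIV_nonneg_imp_nondecreasing[of 0 s H])
    fix x :: real assume "0 \<le> x" "x \<le> s"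
    then show "\<exists>y. DERIV H x :> y \<and> 0 \<le> y"
      using H H'_nonneg by blast
  qed (use assms(1) in simp)
  ultimately show ?thesis
    using assms(2) by (simp flip: ennreal_plus)
qed

text \<open>Write \<open>H s\<close> as \<open>H 0 + \<integral>\<^sub>0\<^sup>s H'\<close> and exchange the order of integration (Tonelli);
  the slice at height \<open>\<sigma>\<close> lies in the disc of radius \<open>R * exp (- \<sigma>)\<close>.\<close>

lemma nn_integral_punctured_disc_radial_le:
  fixes H H' :: "real \<Rightarrow> real" and R :: real
  assumes "0 < R" "0 \<le> H 0" and [measurable]: "H' \<in> borel_measurable borel"
    and H: "\<And>\<sigma>. 0 \<le> \<sigma> \<Longrightarrow> (H has_real_derivative H' \<sigma>) (at \<sigma>)"
    and H'_nonneg: "\<And>\<sigma>. 0 \<le> \<sigma> \<Longrightarrow> 0 \<le> H' \<sigma>"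
  shows "(\<integral>\<^sup>+z \<in> ball 0 R - {0}. ennreal (H (ln R - ln (cmod z))) \<partial>lborel)
    \<le> ennreal (pi * R\<^sup>2 * H 0)
      + (\<integral>\<^sup>+\<sigma> \<in> {0..}. ennreal (pi * (R * exp (- \<sigma>))\<^sup>2 * H' \<sigma>) \<partial>lborel)"
proof -
  define V where "V = {z::complex. z \<noteq> 0 \<and> cmod z < R}"
  define W where "W = {p::complex \<times> real. fst p \<in> V \<and> 0 \<le> snd p \<and> snd p \<le> ln R - ln (cmod (fst p))}"
  define g where "g z \<sigma> = ennreal (H' \<sigma>) * indicator W (z, \<sigma>)" for z \<sigma>
  have V_eq: "ball 0 R - {0} = V"
    by (auto simp: V_def)
  have V_sets [measurable]: "V \<in> sets lborel"
    unfolding V_def by measurable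
  have g_measurable [measurable]: "case_prod g \<in> borel_measurable (lborel \<Otimes>\<^sub>M lborel)"
    unfolding g_def W_def V_def by measurable
  have layer: "ennreal (H (ln R - ln (cmod z))) * indicator V z
      = ennreal (H 0) * indicator V z + (\<integral>\<^sup>+\<sigma>. g z \<sigma> \<partial>lborel)" for z
  proof (cases "z \<in> V")
    case True
    define s where "s = ln R - ln (cmod z)"
    have "0 \<le> s"
      using True assms(1) by (simp add: V_def s_def)
    then have "ennreal (H s) = ennreal (H 0) + (\<integral>\<^sup>+\<sigma> \<in> {0..s}. ennreal (H' \<sigma>) \<partial>lborel)"
      by (rule ennreal_eq_add_nn_integral_deriv[OF _ assms(2-3) H H'_nonneg])
    moreover have "g z \<sigma> = ennreal (H' \<sigma>) * indicator {0..s} \<sigma>" for \<sigma>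
      using True by (simp add: g_def W_def s_def indicator_def)
    ultimately show ?thesis
      using True by (simp add: s_def)
  next
    case False
    then show ?thesis by (simp add: g_def W_def)
  qed
  have slice: "(\<integral>\<^sup>+z. g z \<sigma> \<partial>lborel)
      \<le> ennreal (pi * (R * exp (- \<sigma>))\<^sup>2 * H' \<sigma>) * indicator {0..} \<sigma>" for \<sigma>
  proof (cases "0 \<le> \<sigma>")
    case True
    have "g z \<sigma> \<le> ennreal (H' \<sigma>) * indicator (cball 0 (R * exp (- \<sigma>))) z" for z
    proof (cases "(z, \<sigma>) \<in> W")
      case True
      then have "ln (cmod z) \<le> ln R - \<sigma>" and "z \<noteq> 0"
        by (auto simp: W_def V_def)
      then have "cmod z \<le> exp (ln R - \<sigma>)"
        by (metis exp_le_cancel_iff exp_ln zero_less_norm_iff)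
      also have "\<dots> = R * exp (- \<sigma>)"
        using assms(1) by (simp add: exp_diff exp_minus divide_inverse)
      finally show ?thesis by (simp add: g_def True)
    qed (simp add: g_def)
    then have "(\<integral>\<^sup>+z. g z \<sigma> \<partial>lborel)
        \<le> ennreal (H' \<sigma>) * emeasure lborel (cball (0::complex) (R * exp (- \<sigma>)))"
      by (simp add: nn_integral_mono flip: nn_integral_cmult_indicator)
    also have "\<dots> = ennreal (pi * (R * exp (- \<sigma>))\<^sup>2 * H' \<sigma>)"
      using assms(1) H'_nonneg[OF True]
      by (simp add: emeasure_cball unit_ball_vol_2 ennreal_mult' mult.commute)
    finally show ?thesis using True by simp
  qed (simp add: g_def W_def)
  have "(\<integral>\<^sup>+z \<in> ball 0 R - {0}. ennreal (H (ln R - ln (cmod z))) \<partial>lborel)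
      = (\<integral>\<^sup>+z. ennreal (H 0) * indicator V z + (\<integral>\<^sup>+\<sigma>. g z \<sigma> \<partial>lborel) \<partial>lborel)"
    unfolding V_eq by (simp add: layer)
  also have "\<dots> = ennreal (H 0) * emeasure lborel V + (\<integral>\<^sup>+\<sigma>. (\<integral>\<^sup>+z. g z \<sigma> \<partial>lborel) \<partial>lborel)"
    using nn_integral_cmult_indicator[OF V_sets, of "ennreal (H 0)"]
    by (simp add: nn_integral_add pair_sigma_finite.Fubini'[OF _ g_measurable]
        pair_sigma_finite_def sigma_finite_lborel)
  also have "\<dots> \<le> ennreal (H 0) * emeasure lborel (ball (0::complex) R)
      + (\<integral>\<^sup>+\<sigma> \<in> {0..}. ennreal (pi * (R * exp (- \<sigma>))\<^sup>2 * H' \<sigma>) \<partial>lborel)"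
    unfolding V_eq[symmetric] by (intro add_mono mult_left_mono emeasure_mono nn_integral_mono slice) auto
  also have "ennreal (H 0) * emeasure lborel (ball (0::complex) R) = ennreal (pi * R\<^sup>2 * H 0)"
    using assms(1,2) by (simp add: emeasure_ball unit_ball_vol_2 ennreal_mult' mult.commute)
  finally show ?thesis .
qed

locale cb_surface =
  fixes lc rc s0 se s2 sb :: real
  assumes lc_pos: "0 < lc" and rc_pos: "0 < rc" and rc_small: "rc < 1 / 10"
    and params: "cb_params lc rc s0 se s2 sb"
begin

abbreviation u :: "real \<Rightarrow> real" where
  "u \<equiv> u_cb lc rc s0 se s2 sb"

definition D :: "real \<Rightarrow> real" where
  "D = deriv u"

lemma parameter_ranges:
  "- (lc + pi / 2) / rc < s0" "s0 < - lc / rc" "s0 < se" "se < - lc / rc"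
  "0 < s2" "s2 < pi / (2 * rc)" "s2 < sb"
  using params by (auto simp: cb_params_def)

lemma core_start_neg: "- lc / rc < 0"
  using lc_pos rc_pos by simp

lemma u_has_derivative: "(u has_real_derivative D s) (at s)"
  using params unfolding cb_params_def C1_differentiable_on_eq D_def
  by (simp add: DERIV_deriv_iff_real_differentiable)

lemma isCont_u: "isCont u s"
  using u_has_derivative DERIV_isCont by blast

lemma isCont_D: "isCont D s"
proof -
  have "vector_derivative u (at x) = D x" for x
    using u_has_derivative[of x]
    by (simp add: vector_derivative_at has_real_derivative_iff_has_vector_derivative)
  then have "continuous_on UNIV D"
    using params by (simp add: cb_params_def C1_differentiable_on_eq)
  then show ?thesis
    by (simp add: continuous_on_eq_continuous_at)
qed

lemma u_exterior: "s \<le> s0 \<Longrightarrow> u s = se - s"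
  by (simp add: u_cb_def)

lemma u_inner: "s0 < s \<Longrightarrow> s < - lc / rc \<Longrightarrow> u s = hyperbolic_profile rc lc s"
  by (simp add: u_cb_def hyperbolic_profile_def)

lemma u_core: "- lc / rc \<le> s \<Longrightarrow> s \<le> 0 \<Longrightarrow> u s = ln rc"
  using parameter_ranges by (simp add: u_cb_def)

lemma u_bowl: "0 \<le> s \<Longrightarrow> s \<le> s2 \<Longrightarrow> u s = hyperbolic_profile rc 0 s"
  using parameter_ranges core_start_neg rc_pos
  by (auto simp: u_cb_def hyperbolic_profile_def ln_inverse)

lemma u_cap: "s2 < s \<Longrightarrow> u s = spherical_profile sb s"
  using parameter_ranges core_start_neg by (simp add: u_cb_def spherical_profile_def)

lemma cos_inner_pos: "s0 \<le> s \<Longrightarrow> s \<le> - lc / rc \<Longrightarrow> 0 < cos (rc * s + lc)"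
proof -
  assume s: "s0 \<le> s" "s \<le> - lc / rc"
  have "- (lc + pi / 2) < rc * s0"
    using parameter_ranges(1) rc_pos by (simp add: field_simps)
  moreover have "rc * s0 \<le> rc * s" "rc * s \<le> - lc"
    using s rc_pos by (simp_all add: field_simps)
  ultimately show ?thesis
    using pi_gt_zero by (intro cos_gt_zero_pi) linarith+
qed

lemma cos_bowl_pos: "0 \<le> s \<Longrightarrow> s \<le> s2 \<Longrightarrow> 0 < cos (rc * s)"
proof -
  assume s: "0 \<le> s" "s \<le> s2"
  have "rc * s2 < pi / 2"
    using parameter_ranges(6) rc_pos by (simp add: field_simps)
  moreover have "0 \<le> rc * s" "rc * s \<le> rc * s2"
    using s rc_pos by simp_all
  ultimately show ?thesis
    by (intro cos_gt_zero_pi) linarith+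
qed

lemma D_eqI:
  assumes "open S" "s \<in> S" "\<And>y. y \<in> S \<Longrightarrow> u y = g y" "(g has_real_derivative g') (at s)"
  shows "D s = g'"
  using has_field_derivative_transform_within_open[OF u_has_derivative assms(1-3)] assms(4)
  by (rule DERIV_unique)

lemma D_exterior: "s < s0 \<Longrightarrow> D s = -1"
  by (rule D_eqI[of "{..<s0}" s "\<lambda>s. se - s"]) (auto simp: u_exterior intro!: derivative_eq_intros)

lemma D_inner: "s0 < s \<Longrightarrow> s < - lc / rc \<Longrightarrow> D s = rc * tan (rc * s + lc)"
  by (rule D_eqI[of "{s0<..<- lc / rc}"])
    (auto simp: u_inner intro!: hyperbolic_profile_has_derivative cos_inner_pos rc_pos)

lemma D_core: "- lc / rc < s \<Longrightarrow> s < 0 \<Longrightarrow> D s = 0"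
  by (rule D_eqI[of "{- lc / rc<..<0}" s "\<lambda>_. ln rc"]) (auto simp: u_core)

lemma D_bowl_interior: "0 < s \<Longrightarrow> s < s2 \<Longrightarrow> D s = rc * tan (rc * s)"
  using hyperbolic_profile_has_derivative[of rc s 0] cos_bowl_pos[of s] rc_pos
  by (intro D_eqI[of "{0<..<s2}" s "hyperbolic_profile rc 0"]) (auto simp: u_bowl)

lemma D_cap_interior: "s2 < s \<Longrightarrow> D s = - tanh (s - sb)"
  by (rule D_eqI[of "{s2<..}"]) (auto simp: u_cap intro: spherical_profile_has_derivative)

lemma D_s0: "D s0 = -1" "D s0 = rc * tan (rc * s0 + lc)"
proof -
  show "D s0 = -1"
    by (rule isCont_eq_on_closure[where f=D and x=s0 and g="\<lambda>_. -1" and S="{..<s0}"])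
      (auto simp: isCont_D D_exterior)
  have "0 < cos (rc * s0 + lc)"
    using parameter_ranges by (intro cos_inner_pos) auto
  then have "isCont (\<lambda>s. rc * tan (rc * s + lc)) s0"
    using hyperbolic_profile_second_derivative[OF rc_pos] by (blast intro: DERIV_isCont)
  then show "D s0 = rc * tan (rc * s0 + lc)"
    using parameter_ranges
    by (intro isCont_eq_on_closure[where f=D and x=s0 and S="{s0<..<- lc / rc}"])
      (auto simp: isCont_D D_inner)
qed

lemma u_s0: "u s0 = hyperbolic_profile rc lc s0"
proof -
  have "0 < cos (rc * s0 + lc)"
    using parameter_ranges by (intro cos_inner_pos) auto
  then have "isCont (hyperbolic_profile rc lc) s0"
    using hyperbolic_profile_has_derivative[OF rc_pos] by (blast intro: DERIV_isCont)
  then show ?thesis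
    using parameter_ranges
    by (intro isCont_eq_on_closure[where f=u and x=s0 and S="{s0<..<- lc / rc}"])
      (auto simp: isCont_u u_inner)
qed

lemma D_bowl: "0 \<le> s \<Longrightarrow> s \<le> s2 \<Longrightarrow> D s = rc * tan (rc * s)"
proof -
  assume s: "0 \<le> s" "s \<le> s2"
  have "isCont (\<lambda>s. rc * tan (rc * s)) s"
    using hyperbolic_profile_second_derivative[of rc s 0] cos_bowl_pos[OF s] rc_pos
    by (auto intro: DERIV_isCont)
  then show ?thesis
    using s parameter_ranges
    by (intro isCont_eq_on_closure[where f=D and x=s and S="{0<..<s2}"])
      (auto simp: isCont_D D_bowl_interior)
qed

lemma u_cap_closed: "s2 \<le> s \<Longrightarrow> u s = spherical_profile sb s"
  using spherical_profile_has_derivative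
  by (intro isCont_eq_on_closure[where f=u and x=s and S="{s2<..}"])
    (auto simp: isCont_u u_cap intro: DERIV_isCont)

lemma D_cap: "s2 \<le> s \<Longrightarrow> D s = - tanh (s - sb)"
  using spherical_profile_second_derivative
  by (intro isCont_eq_on_closure[where f=D and x=s and S="{s2<..}"])
    (auto simp: isCont_D D_cap_interior intro: DERIV_isCont)


lemma tan_s0: "tan (rc * s0 + lc) = - inverse rc"
  using D_s0 rc_pos by (simp add: field_simps)

lemma s0_eq: "s0 = - (lc + arctan (inverse rc)) / rc"
proof -
  have "- (pi / 2) < rc * s0 + lc" "rc * s0 + lc < pi / 2"
    using parameter_ranges(1,2) rc_pos lc_pos pi_gt_zero by (auto simp: field_simps)
  then have "rc * s0 + lc = arctan (tan (rc * s0 + lc))"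
    by (simp add: arctan_tan)
  also have "\<dots> = - arctan (inverse rc)"
    by (simp add: tan_s0 arctan_minus)
  finally show ?thesis
    using rc_pos by (simp add: field_simps)
qed

lemma se_eq: "se = s0 + ln (1 + rc\<^sup>2) / 2"
proof -
  have "0 < cos (rc * s0 + lc)"
    using parameter_ranges by (intro cos_inner_pos) auto
  then have "exp (2 * u s0) = rc\<^sup>2 * (1 + (tan (rc * s0 + lc))\<^sup>2)"
    unfolding u_s0 by (rule exp_twice_hyperbolic_profile[OF rc_pos])
  also have "\<dots> = 1 + rc\<^sup>2"
    unfolding tan_s0 using rc_pos by (simp add: power_inverse field_simps)
  finally have "exp (2 * u s0) = 1 + rc\<^sup>2" .
  then have "2 * (se - s0) = ln (1 + rc\<^sup>2)"
    by (metis u_exterior order.refl ln_exp)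
  then show ?thesis by simp
qed

lemma exp_twice_u_s2:
  "exp (2 * u s2) = rc\<^sup>2 + (D s2)\<^sup>2" "exp (2 * u s2) = 2 * (1 - (D s2)\<^sup>2)"
proof -
  have "0 < cos (rc * s2)"
    using parameter_ranges by (intro cos_bowl_pos) auto
  then show "exp (2 * u s2) = rc\<^sup>2 + (D s2)\<^sup>2"
    using parameter_ranges rc_pos exp_twice_hyperbolic_profile[of rc s2 0]
    by (simp add: u_bowl D_bowl power_mult_distrib algebra_simps)
  show "exp (2 * u s2) = 2 * (1 - (D s2)\<^sup>2)"
    by (simp add: u_cap_closed D_cap exp_twice_spherical_profile)
qed

lemma D_s2_eq_tanh: "D s2 = tanh (sb - s2)"
  by (simp add: D_cap flip: tanh_minus)

lemma D_s2_sq: "3 * (D s2)\<^sup>2 = 2 - rc\<^sup>2"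
  using exp_twice_u_s2 by simp

lemma D_s2_pos: "0 < D s2"
  using parameter_ranges by (simp add: D_s2_eq_tanh)

lemma D_s2_lt_1: "D s2 < 1"
  by (simp add: D_s2_eq_tanh tanh_real_lt_1)

lemma sb_bound: "sb \<le> 7 / 4 / rc"
proof -
  have "(D s2)\<^sup>2 \<le> 2 / 3"
    using D_s2_sq zero_le_power2[of rc] by linarith
  then have "(D s2)\<^sup>2 \<le> (41 / 50)\<^sup>2"
    by (simp add: power2_eq_square)
  then have "D s2 \<le> 41 / 50"
    by (rule power2_le_imp_le) simp
  then have "tanh (sb - s2) \<le> tanh (179 / 100)"
    using tanh_179_100_ge D_s2_eq_tanh by linarith
  then have "sb - s2 \<le> 179 / 100"
    by simp
  then have "rc * sb - rc * s2 \<le> rc * (179 / 100)"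
    using rc_pos by (simp flip: right_diff_distrib)
  moreover have "rc * s2 < pi / 2"
    using parameter_ranges(6) rc_pos by (simp add: field_simps)
  ultimately have "rc * sb < pi / 2 + 179 / 100 * rc"
    by linarith
  also have "\<dots> \<le> 7 / 4"
    using pi_approx rc_small by simp
  finally show ?thesis
    using rc_pos by (simp add: field_simps)
qed


lemma norm_eq_exp_cb_s: "z \<noteq> 0 \<Longrightarrow> cmod z = exp (se - cb_s se z)"
  by (simp add: cb_s_def)

lemma U_c_eq_annulus: "U_c lc rc se = {z. exp se < cmod z \<and> cmod z < exp (se + lc / rc)}"
proof -
  have "z \<in> U_c lc rc se \<longleftrightarrow> exp se < cmod z \<and> cmod z < exp (se + lc / rc)" for z
  proof (cases "z = 0")
    case False
    then have "exp se < cmod z \<longleftrightarrow> se < ln (cmod z)"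
      and "cmod z < exp (se + lc / rc) \<longleftrightarrow> ln (cmod z) < se + lc / rc"
      by (metis exp_less_cancel_iff exp_ln zero_less_norm_iff)+
    then show ?thesis
      using False by (auto simp: U_c_def cb_s_def)
  qed (auto simp: U_c_def)
  then show ?thesis by auto
qed

lemma ball_eq: "ball 0 (sqrt (1 + rc\<^sup>2)) = U_i lc rc s0 se \<union> closure (U_c lc rc se) \<union> U_b se"
proof -
  have "(exp (se - s0))\<^sup>2 = 1 + rc\<^sup>2"
    using se_eq by (simp add: add_pos_nonneg flip: exp_double)
  then have radius: "sqrt (1 + rc\<^sup>2) = exp (se - s0)"
    by (simp add: real_sqrt_unique)
  have closure_U_c: "closure (U_c lc rc se) = {z. exp se \<le> cmod z \<and> cmod z \<le> exp (se + lc / rc)}"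
    unfolding U_c_eq_annulus using lc_pos rc_pos by (intro closure_annulus) auto
  have "z \<in> ball 0 (sqrt (1 + rc\<^sup>2)) \<longleftrightarrow> z \<in> U_i lc rc s0 se \<union> closure (U_c lc rc se) \<union> U_b se" for z
  proof (cases "z = 0")
    case True
    then show ?thesis by (simp add: U_b_def add_pos_nonneg)
  next
    case False
    define L where "L = ln (cmod z)"
    have z: "cmod z = exp L"
      using False by (simp add: L_def)
    have "z \<in> ball 0 (sqrt (1 + rc\<^sup>2)) \<longleftrightarrow> L < se - s0"
      by (simp add: radius z)
    moreover have "z \<in> U_i lc rc s0 se \<union> closure (U_c lc rc se) \<union> U_b se \<longleftrightarrow>
        (s0 < se - L \<and> se - L < - lc / rc) \<or> (se \<le> L \<and> L \<le> se + lc / rc) \<or> 0 < se - L"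
      using False by (simp add: closure_U_c U_i_def U_b_def cb_s_def L_def[symmetric] z)
    ultimately show ?thesis
      using parameter_ranges core_start_neg by (auto simp: field_simps)
  qed
  then show ?thesis by blast
qed

lemma D_has_derivative_exterior: "s < s0 \<Longrightarrow> (D has_real_derivative 0) (at s)"
  by (rule has_field_derivative_transform_within_open[of "\<lambda>_. -1" _ _ "{..<s0}"]) (auto simp: D_exterior)

lemma D_has_derivative_inner:
  assumes "s0 < s" "s < - lc / rc"
  shows "(D has_real_derivative exp (2 * u s)) (at s)"
proof -
  have "0 < cos (rc * s + lc)"
    using assms by (intro cos_inner_pos) auto
  then show ?thesis
    unfolding u_inner[OF assms]
    by (rule has_field_derivative_transform_within_open[OF hyperbolic_profile_second_derivative[OF rc_pos],
          where S="{s0<..<- lc / rc}"]) (use assms in \<open>auto simp: D_inner\<close>)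
qed

lemma D_has_derivative_core: "- lc / rc < s \<Longrightarrow> s < 0 \<Longrightarrow> (D has_real_derivative 0) (at s)"
  by (rule has_field_derivative_transform_within_open[of "\<lambda>_. 0" _ _ "{- lc / rc<..<0}"]) (auto simp: D_core)

lemma D_has_derivative_bowl:
  assumes "0 < s" "s < s2"
  shows "(D has_real_derivative exp (2 * u s)) (at s)"
proof -
  have "0 < cos (rc * s + 0)"
    using assms by (simp add: cos_bowl_pos)
  then show ?thesis
    unfolding u_bowl[OF less_imp_le less_imp_le, OF assms]
    by (rule has_field_derivative_transform_within_open[OF hyperbolic_profile_second_derivative[OF rc_pos],
          where S="{0<..<s2}"]) (use assms in \<open>auto simp: D_bowl_interior\<close>)
qed

lemma D_has_derivative_cap:
  assumes "s2 < s"
  shows "(D has_real_derivative - exp (2 * u s) / 2) (at s)"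
  unfolding u_cap[OF assms]
  by (rule has_field_derivative_transform_within_open[OF spherical_profile_second_derivative,
        where S="{s2<..}"]) (use assms in \<open>auto simp: D_cap_interior\<close>)

lemma curvature_off_junctions:
  assumes "s \<notin> {s0, - lc / rc, 0, s2}"
  shows "\<exists>d. (D has_real_derivative d) (at s) \<and> - exp (- 2 * u s) * d \<in> {-1 .. 1 / 2}"
proof -
  have exp_cancel: "exp (- 2 * u s) * exp (2 * u s) = 1"
    by (simp flip: exp_add)
  consider "s < s0" | "s0 < s" "s < - lc / rc" | "- lc / rc < s" "s < 0" | "0 < s" "s < s2" | "s2 < s"
    using assms by (metis insertCI linorder_neqE_linordered_idom)
  then show ?thesis
  proof cases
    case 1
    then show ?thesis using D_has_derivative_exterior by (intro exI[of _ 0]) simp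
  next
    case 2
    then show ?thesis using D_has_derivative_inner exp_cancel by (intro exI[of _ "exp (2 * u s)"]) simp
  next
    case 3
    then show ?thesis using D_has_derivative_core by (intro exI[of _ 0]) simp
  next
    case 4
    then show ?thesis using D_has_derivative_bowl exp_cancel by (intro exI[of _ "exp (2 * u s)"]) simp
  next
    case 5
    then show ?thesis using D_has_derivative_cap exp_cancel by (intro exI[of _ "- exp (2 * u s) / 2"]) simp
  qed
qed

lemma AE_curvature_bounds:
  "AE z in (lborel :: complex measure).
     deriv u differentiable (at (cb_s se z)) \<and> K_cb lc rc s0 se s2 sb z \<in> {-1 .. 1 / 2}"
proof (rule AE_I')
  show "(\<Union>r \<in> {s0, - lc / rc, 0, s2}. sphere 0 (exp (se - r))) \<in> null_sets lborel"
    by (intro null_sets.finite_UN) (auto simp: sphere_in_null_sets)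
  show "{z \<in> space lborel. \<not> (deriv u differentiable (at (cb_s se z))
      \<and> K_cb lc rc s0 se s2 sb z \<in> {-1 .. 1 / 2})}
    \<subseteq> (\<Union>r \<in> {s0, - lc / rc, 0, s2}. sphere 0 (exp (se - r)))"
  proof clarify
    fix z :: complex
    assume bad: "\<not> (deriv u differentiable (at (cb_s se z)) \<and> K_cb lc rc s0 se s2 sb z \<in> {-1 .. 1 / 2})"
    have junction: "cb_s se z \<in> {s0, - lc / rc, 0, s2}"
    proof (rule ccontr)
      assume "cb_s se z \<notin> {s0, - lc / rc, 0, s2}"
      then obtain d where "(D has_real_derivative d) (at (cb_s se z))"
        and "- exp (- 2 * u (cb_s se z)) * d \<in> {-1 .. 1 / 2}"
        using curvature_off_junctions by blast
      then show False
        using bad by (auto simp: K_cb_def D_def[symmetric] DERIV_imp_deriv real_differentiable_def)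
    qed
    have "z \<noteq> 0"
    proof
      assume "z = 0"
      then have "cb_s se z = se"
        by (simp add: cb_s_def)
      then show False
        using junction parameter_ranges core_start_neg by auto
    qed
    then show "z \<in> (\<Union>r \<in> {s0, - lc / rc, 0, s2}. sphere 0 (exp (se - r)))"
      using junction norm_eq_exp_cb_s by (intro UN_I[of "cb_s se z"]) auto
  qed
qed


lemma borel_measurable_u [measurable]: "u \<in> borel_measurable borel"
  using isCont_u by (intro borel_measurable_continuous_onI continuous_at_imp_continuous_on) auto

lemma borel_measurable_D [measurable]: "D \<in> borel_measurable borel"
  using isCont_D by (intro borel_measurable_continuous_onI continuous_at_imp_continuous_on) auto

lemma D_ge_minus_one: "0 \<le> s \<Longrightarrow> -1 \<le> D s"
proof (cases "s \<le> s2")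
  case True
  assume "0 \<le> s"
  have "rc * s \<le> rc * s2"
    using True rc_pos by simp
  moreover have "rc * s2 < pi / 2"
    using parameter_ranges(6) rc_pos by (simp add: field_simps)
  ultimately have "rc * s < pi / 2"
    by linarith
  then have "0 \<le> tan (rc * s)"
    using \<open>0 \<le> s\<close> rc_pos by (simp add: tan_pos_pi2_le)
  then have "0 \<le> D s"
    using \<open>0 \<le> s\<close> True rc_pos by (simp add: D_bowl)
  then show ?thesis by simp
next
  case False
  then show ?thesis
    using tanh_real_lt_1[of "s - sb"] by (simp add: D_cap)
qed

definition radial_density :: "real \<Rightarrow> real" where
  "radial_density \<sigma> = pi * ((2 * D \<sigma> + 2) * exp (2 * u \<sigma>))"

lemma borel_measurable_radial_density [measurable]: "radial_density \<in> borel_measurable borel"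
  unfolding radial_density_def by measurable

lemma radial_density_nonneg: "0 \<le> s \<Longrightarrow> 0 \<le> radial_density s"
  using D_ge_minus_one[of s] by (simp add: radial_density_def)

lemma nn_integral_bowl:
  "(\<integral>\<^sup>+\<sigma> \<in> {0..s2}. ennreal (radial_density \<sigma>) \<partial>lborel) = ennreal (pi * ((D s2)\<^sup>2 + 2 * D s2))"
proof -
  define F where "F x = pi * (exp (2 * hyperbolic_profile rc 0 x) + 2 * (rc * tan (rc * x)))" for x
  have F_deriv: "(F has_real_derivative radial_density x) (at x)" if "0 \<le> x" "x \<le> s2" for x
  proof -
    have "0 < cos (rc * x + 0)"
      using cos_bowl_pos that by simp
    note first = hyperbolic_profile_has_derivative[OF rc_pos this, simplified]
      and second = hyperbolic_profile_second_derivative[OF rc_pos this, simplified]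
    show ?thesis
      unfolding F_def
      by (rule DERIV_cong[OF DERIV_cmult[OF DERIV_add[OF DERIV_fun_exp[OF DERIV_cmult[OF first]]
            DERIV_cmult[OF second]]]])
        (use that in \<open>simp add: radial_density_def D_bowl u_bowl algebra_simps\<close>)
  qed
  have "F 0 = pi * rc\<^sup>2"
    using rc_pos by (simp add: F_def exp_twice_hyperbolic_profile)
  moreover have "F s2 = pi * (exp (2 * u s2) + 2 * D s2)"
    using parameter_ranges by (simp add: F_def u_bowl D_bowl)
  ultimately have "F s2 - F 0 = pi * ((D s2)\<^sup>2 + 2 * D s2)"
    by (simp add: exp_twice_u_s2(1) algebra_simps)
  moreover have "(\<integral>\<^sup>+\<sigma> \<in> {0..s2}. ennreal (radial_density \<sigma>) \<partial>lborel) = ennreal (F s2 - F 0)"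
    using parameter_ranges by (intro nn_integral_FTC_Icc F_deriv radial_density_nonneg) auto
  ultimately show ?thesis by simp
qed

lemma nn_integral_cap:
  "(\<integral>\<^sup>+\<sigma> \<in> {s2..}. ennreal (radial_density \<sigma>) \<partial>lborel) = ennreal (pi * (2 + 2 * (D s2)\<^sup>2 + 4 * D s2))"
proof -
  define F where "F x = pi * (exp (2 * spherical_profile sb x) - 4 * (- tanh (x - sb)))" for x
  have F_deriv: "(F has_real_derivative radial_density x) (at x)" if "s2 \<le> x" for x
    unfolding F_def
    by (rule DERIV_cong[OF DERIV_cmult[OF DERIV_diff[OF DERIV_fun_exp[OF DERIV_cmult[OF
          spherical_profile_has_derivative]] DERIV_cmult[OF spherical_profile_second_derivative]]]])
      (use that in \<open>simp add: radial_density_def D_cap u_cap_closed algebra_simps\<close>)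
  have "filterlim (\<lambda>x. - sb + x) at_top at_top"
    by (rule filterlim_tendsto_add_at_top[OF tendsto_const filterlim_ident])
  then have "((\<lambda>x. tanh (x - sb)) \<longlongrightarrow> 1) at_top"
    by (intro filterlim_compose[OF tanh_real_at_top]) simp
  moreover have F_eq: "F = (\<lambda>x. pi * (2 * (1 - (tanh (x - sb))\<^sup>2) + 4 * tanh (x - sb)))"
    by (simp add: fun_eq_iff F_def exp_twice_spherical_profile)
  ultimately have "(F \<longlongrightarrow> pi * (2 * (1 - 1\<^sup>2) + 4 * 1)) at_top"
    unfolding F_eq by (intro tendsto_intros)
  then have F_limit: "(F \<longlongrightarrow> 4 * pi) at_top"
    by (simp add: mult.commute)
  have "F s2 = pi * (exp (2 * u s2) - 4 * D s2)"
    by (simp add: F_def u_cap_closed D_cap)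
  then have "4 * pi - F s2 = pi * (2 + 2 * (D s2)\<^sup>2 + 4 * D s2)"
    by (simp add: exp_twice_u_s2(2) algebra_simps)
  moreover have "(\<integral>\<^sup>+\<sigma> \<in> {s2..}. ennreal (radial_density \<sigma>) \<partial>lborel) = ennreal (4 * pi - F s2)"
    using parameter_ranges by (intro nn_integral_FTC_atLeast F_deriv F_limit radial_density_nonneg) auto
  ultimately show ?thesis by simp
qed

text \<open>The integrand of \<open>vol_cb\<close> is 0 at the origin (division by \<open>cmod 0 = 0\<close>), so the origin,
  which belongs to \<open>U_b se\<close>, may be removed.\<close>

lemma vol_U_b_punctured:
  "vol_cb lc rc s0 se s2 sb (U_b se)
    = (\<integral>\<^sup>+z \<in> ball 0 (exp se) - {0}. ennreal (exp (2 * u (cb_s se z)) / (cmod z)\<^sup>2) \<partial>lborel)"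
  unfolding vol_cb_def
proof (intro nn_integral_cong)
  fix z :: complex
  show "ennreal (exp (2 * u (cb_s se z)) / (cmod z)\<^sup>2) * indicator (U_b se) z
      = ennreal (exp (2 * u (cb_s se z)) / (cmod z)\<^sup>2) * indicator (ball 0 (exp se) - {0}) z"
  proof (cases "z = 0")
    case False
    then have "z \<in> U_b se \<longleftrightarrow> z \<in> ball 0 (exp se) - {0}"
      using norm_eq_exp_cb_s[OF False] by (auto simp: U_b_def)
    then show ?thesis by (simp add: indicator_def)
  qed simp
qed

definition area_density :: "real \<Rightarrow> real" where
  "area_density \<sigma> = exp (2 * u \<sigma> + 2 * \<sigma> - 2 * se)"

lemma borel_measurable_area_density [measurable]: "area_density \<in> borel_measurable borel"
  unfolding area_density_def by measurable

lemma area_density_cb_s: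
  assumes "z \<noteq> 0"
  shows "area_density (se - ln (cmod z)) = exp (2 * u (cb_s se z)) / (cmod z)\<^sup>2"
proof -
  have "(cmod z)\<^sup>2 = exp (2 * ln (cmod z))"
    using assms by (simp add: exp_double)
  then show ?thesis
    by (simp add: area_density_def cb_s_def exp_diff algebra_simps)
qed

lemma area_density_has_derivative:
  "(area_density has_real_derivative (2 * D \<sigma> + 2) * area_density \<sigma>) (at \<sigma>)"
  unfolding area_density_def
  by (auto intro!: derivative_eq_intros u_has_derivative simp: algebra_simps)

lemma disc_area_mult_area_density_deriv:
  "pi * (exp se * exp (- \<sigma>))\<^sup>2 * ((2 * D \<sigma> + 2) * area_density \<sigma>) = radial_density \<sigma>"
proof -
  have "(exp se * exp (- \<sigma>))\<^sup>2 * area_density \<sigma>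
      = exp (2 * (se + - \<sigma>) + (2 * u \<sigma> + 2 * \<sigma> - 2 * se))"
    unfolding area_density_def by (simp only: exp_add exp_double)
  also have "\<dots> = exp (2 * u \<sigma>)"
    by (simp add: algebra_simps)
  finally show ?thesis
    by (simp add: radial_density_def mult_ac)
qed

lemma vol_U_b_le:
  "vol_cb lc rc s0 se s2 sb (U_b se)
    \<le> ennreal (pi * rc\<^sup>2) + (\<integral>\<^sup>+\<sigma> \<in> {0..}. ennreal (radial_density \<sigma>) \<partial>lborel)"
proof -
  have "area_density 0 = exp (2 * ln rc) / exp (2 * se)"
    using core_start_neg by (simp add: area_density_def u_core exp_diff)
  then have center: "pi * (exp se)\<^sup>2 * area_density 0 = pi * rc\<^sup>2"
    using rc_pos by (simp add: exp_double)
  have "vol_cb lc rc s0 se s2 sb (U_b se)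
      = (\<integral>\<^sup>+z \<in> ball 0 (exp se) - {0}. ennreal (area_density (ln (exp se) - ln (cmod z))) \<partial>lborel)"
    unfolding vol_U_b_punctured
    by (intro nn_integral_cong) (simp add: area_density_cb_s split: split_indicator)
  also have "\<dots> \<le> ennreal (pi * (exp se)\<^sup>2 * area_density 0) + (\<integral>\<^sup>+\<sigma> \<in> {0..}.
      ennreal (pi * (exp se * exp (- \<sigma>))\<^sup>2 * ((2 * D \<sigma> + 2) * area_density \<sigma>)) \<partial>lborel)"
  proof (rule nn_integral_punctured_disc_radial_le[OF _ _ _ area_density_has_derivative])
    show "0 \<le> (2 * D \<sigma> + 2) * area_density \<sigma>" if "0 \<le> \<sigma>" for \<sigma>
      using D_ge_minus_one[OF that] by (simp add: area_density_def)
  qed (simp_all add: area_density_def)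
  finally show ?thesis
    by (simp only: center disc_area_mult_area_density_deriv)
qed

lemma vol_U_b_lt: "vol_cb lc rc s0 se s2 sb (U_b se) < ennreal (10 * pi)"
proof -
  have "(\<integral>\<^sup>+\<sigma> \<in> {0..}. ennreal (radial_density \<sigma>) \<partial>lborel)
      \<le> (\<integral>\<^sup>+\<sigma> \<in> {0..s2}. ennreal (radial_density \<sigma>) \<partial>lborel)
        + (\<integral>\<^sup>+\<sigma> \<in> {s2..}. ennreal (radial_density \<sigma>) \<partial>lborel)"
    by (subst nn_integral_add[symmetric])
      (auto intro!: nn_integral_mono simp: radial_density_def split: split_indicator)
  also have "\<dots> = ennreal (pi * ((D s2)\<^sup>2 + 2 * D s2) + pi * (2 + 2 * (D s2)\<^sup>2 + 4 * D s2))"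
    using D_s2_pos by (simp add: nn_integral_bowl nn_integral_cap ennreal_plus)
  finally have radial_integral: "(\<integral>\<^sup>+\<sigma> \<in> {0..}. ennreal (radial_density \<sigma>) \<partial>lborel)
      \<le> ennreal (pi * ((D s2)\<^sup>2 + 2 * D s2) + pi * (2 + 2 * (D s2)\<^sup>2 + 4 * D s2))" .
  have "rc\<^sup>2 + (((D s2)\<^sup>2 + 2 * D s2) + (2 + 2 * (D s2)\<^sup>2 + 4 * D s2)) = 4 + 6 * D s2"
    using D_s2_sq by simp
  then have total: "pi * rc\<^sup>2 + (pi * ((D s2)\<^sup>2 + 2 * D s2) + pi * (2 + 2 * (D s2)\<^sup>2 + 4 * D s2))
      = pi * (4 + 6 * D s2)"
    by (metis distrib_left)
  have "vol_cb lc rc s0 se s2 sb (U_b se)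
      \<le> ennreal (pi * rc\<^sup>2) + (\<integral>\<^sup>+\<sigma> \<in> {0..}. ennreal (radial_density \<sigma>) \<partial>lborel)"
    by (rule vol_U_b_le)
  also have "\<dots> \<le> ennreal (pi * rc\<^sup>2)
      + ennreal (pi * ((D s2)\<^sup>2 + 2 * D s2) + pi * (2 + 2 * (D s2)\<^sup>2 + 4 * D s2))"
    using radial_integral by (rule add_left_mono)
  also have "\<dots> = ennreal (pi * (4 + 6 * D s2))"
    using D_s2_pos by (simp add: total flip: ennreal_plus)
  also have "\<dots> < ennreal (10 * pi)"
    using D_s2_lt_1 D_s2_pos by (simp add: ennreal_less_iff)
  finally show ?thesis .
qed

end

theorem lemma3p2:
  fixes lc rc s0 se s2 sb :: real
  assumes "lc > 0" and "0 < rc" and "rc < 1 / 10"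
    and "cb_params lc rc s0 se s2 sb"
  shows "((AE z in (lborel :: complex measure).
            deriv (u_cb lc rc s0 se s2 sb) differentiable (at (cb_s se z)) \<and>
            K_cb lc rc s0 se s2 sb z \<in> {-1 .. 1 / 2})) \<and>
         s0 = - (lc + arctan (inverse rc)) / rc \<and>
         se = s0 + ln (1 + rc\<^sup>2) / 2 \<and>
         ball 0 (sqrt (1 + rc\<^sup>2)) = U_i lc rc s0 se \<union> closure (U_c lc rc se) \<union> U_b se \<and>
         sb \<le> 7 / 4 / rc \<and>
         vol_cb lc rc s0 se s2 sb (U_b se) < ennreal (10 * pi)"
proof -
  interpret cb_surface lc rc s0 se s2 sb
    using assms by unfold_locales
  show ?thesis
    using AE_curvature_bounds s0_eq se_eq ball_eq sb_bound vol_U_b_lt by blast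
qed

end
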